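(* Let $0<\alpha<\pi$, $\varepsilon=e^{i\alpha}$ and $0<c<2$. Then there exists a sequence $(x_n)_{n\ge0}$ of complex numbers with $x_n=e^{i\beta_n}$, $0<\beta_n<\alpha$ for all $n\ge0$, satisfying for every $n\ge0$ $$(n+1)(x_n^2-1)\frac{x_{n+1}+x_n/\varepsilon}{\varepsilon+x_nx_{n+1}}-n\left(1-\frac{x_n^2}{\varepsilon^2}\right)\frac{x_{n-1}+\varepsilon x_n}{\varepsilon+x_{n-1}x_n}=c\,x_n\frac{\varepsilon^2-1}{2\varepsilon^2}$$ (for $n=0$ the second term on the left is omitted).
   Context: This is a discrete Painlevé-type equation; the denominators $\varepsilon+x_nx_{n+1}$ are nonzero along the solution. *)

theory Defs
  imports "HOL-Analysis.Analysis"
begin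

end

theory Submission
  imports Defs
begin

(* Write x_n = cis beta_n. The quantity K_n = (eps x_(n+1) + x_n) / (eps + x_n x_(n+1)) is then
   real, and after division by 2 i x_n / eps the equation becomes the real recurrence
   (n+1) sin beta_n K_n = c sin alpha / 2 + n sin (alpha - beta_n) K_(n-1), with K_(-1) = 0.
   Conversely beta_(n+1) is recovered from beta_n and K_n, and it lies in (0, alpha) iff
   K_top beta_n < K_n < 1. So every initial angle beta_0 in [0, alpha] determines an orbit that
   either leaves (0, alpha) through 0 (some K_n > 1), or through alpha (some K_n < K_top beta_n),
   or never leaves. Both ways of leaving are open conditions on beta_0; beta_0 = 0 leaves through 0
   and, because c < 2, beta_0 = alpha leaves through alpha. By connectedness of [0, alpha] some
   beta_0 never leaves, and its orbit is the required solution. *)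

lemma cis_add_plus_cis_diff: "cis (u + v) + cis (u - v) = complex_of_real (2 * cos v) * cis u"
  by (simp add: complex_eq_iff cos_add sin_add cos_diff sin_diff algebra_simps)

lemma power2_cis_diff:
  "cis a ^ 2 - cis b ^ 2 = 2 * \<i> * complex_of_real (sin (a - b)) * cis a * cis b"
proof -
  have "cis (a - b) - cis (b - a) = 2 * \<i> * complex_of_real (sin (a - b))"
    using cos_minus[of "a - b"] sin_minus[of "a - b"] by (simp add: complex_eq_iff)
  moreover have "cis a ^ 2 = cis a * cis b * cis (a - b)" "cis b ^ 2 = cis a * cis b * cis (b - a)"
    by (simp_all add: cis_mult power2_eq_square)
  ultimately show ?thesis
    by (simp add: right_diff_distrib[symmetric] mult.commute mult.left_commute)
qed

lemma cis_recurrence_of_real_recurrence: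
  fixes a b c K Kp :: real
  assumes "real (Suc n) * sin b * K = c * sin a / 2 + real n * sin (a - b) * Kp"
  shows "of_nat (Suc n) * (cis b ^ 2 - 1) * (complex_of_real K / cis a)
      - of_nat n * (1 - cis b ^ 2 / cis a ^ 2) * complex_of_real Kp
    = complex_of_real c * cis b * ((cis a ^ 2 - 1) / (2 * cis a ^ 2))"
proof -
  have sq_minus_1: "cis t ^ 2 - 1 = 2 * \<i> * complex_of_real (sin t) * cis t" for t
    using power2_cis_diff[of t 0] by simp
  have "1 - cis b ^ 2 / cis a ^ 2 = (cis a ^ 2 - cis b ^ 2) / (cis a * cis a)"
    by (simp add: field_simps power2_eq_square)
  also have "\<dots> = 2 * \<i> * complex_of_real (sin (a - b)) * cis b / cis a"
    unfolding power2_cis_diff by (simp add: field_simps)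
  finally have one_minus_ratio:
    "1 - cis b ^ 2 / cis a ^ 2 = 2 * \<i> * complex_of_real (sin (a - b)) * cis b / cis a" .
  have "of_nat (Suc n) * (cis b ^ 2 - 1) * (complex_of_real K / cis a)
      - of_nat n * (1 - cis b ^ 2 / cis a ^ 2) * complex_of_real Kp
    = 2 * \<i> * cis b / cis a
      * complex_of_real (real (Suc n) * sin b * K - real n * sin (a - b) * Kp)"
    unfolding sq_minus_1 one_minus_ratio by (simp add: divide_inverse algebra_simps)
  also have "\<dots> = 2 * \<i> * cis b / cis a * complex_of_real (c * sin a / 2)"
    using assms by simp
  also have "\<dots> = complex_of_real c * cis b * ((cis a ^ 2 - 1) / (2 * cis a ^ 2))"
    unfolding sq_minus_1 by (simp add: field_simps power2_eq_square)
  finally show ?thesis .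
qed

lemma cis_mult_add_cis_eq_of_cos:
  fixes a b b' K :: real
  defines "w \<equiv> (a - b - b') / 2"
  assumes cos_rel: "cos ((a - b + b') / 2) = K * cos w"
  shows "cis a * cis b' + cis b = complex_of_real K * (cis a + cis b * cis b')"
    and "cos w \<noteq> 0 \<Longrightarrow> cis a + cis b * cis b' \<noteq> 0"
proof -
  define u where "u = (a + b + b') / 2"
  define v where "v = (a - b + b') / 2"
  have uvw: "u + v = a + b'" "u - v = b" "u + w = a" "u - w = b + b'"
    by (simp_all add: u_def v_def w_def field_simps)
  have "cis a * cis b' + cis b = cis (u + v) + cis (u - v)"
    unfolding uvw(1,2) by (simp add: cis_mult)
  also have "\<dots> = complex_of_real (2 * K * cos w) * cis u"
    by (simp add: cis_add_plus_cis_diff v_def cos_rel)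
  finally have lhs: "cis a * cis b' + cis b = complex_of_real (2 * K * cos w) * cis u" .
  have "cis a + cis b * cis b' = cis (u + w) + cis (u - w)"
    unfolding uvw(3,4) by (simp add: cis_mult)
  also have "\<dots> = complex_of_real (2 * cos w) * cis u"
    by (rule cis_add_plus_cis_diff)
  finally have rhs: "cis a + cis b * cis b' = complex_of_real (2 * cos w) * cis u" .
  show "cis a * cis b' + cis b = complex_of_real K * (cis a + cis b * cis b')"
    unfolding lhs rhs by simp
  show "cos w \<noteq> 0 \<Longrightarrow> cis a + cis b * cis b' \<noteq> 0"
    unfolding rhs by simp
qed

lemma eventually_less_nhds_isCont:
  fixes f g :: "'a::t2_space \<Rightarrow> real"
  assumes "isCont f x" "isCont g x" "f x < g x"
  shows "eventually (\<lambda>y. f y < g y) (nhds x)"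
proof -
  have "((\<lambda>y. g y - f y) \<longlongrightarrow> g x - f x) (nhds x)"
    using assms(1,2) by (intro tendsto_diff) (simp_all add: isContD tendsto_at_iff_tendsto_nhds[symmetric])
  from order_tendstoD(1)[OF this, of 0] assms(3) show ?thesis
    by simp
qed

lemma connected_exists_neither:
  fixes S :: "'a::topological_space set"
  assumes "connected S" "a \<in> S" "P a" "b \<in> S" "Q b"
    and P_open: "\<And>x. x \<in> S \<Longrightarrow> P x \<Longrightarrow> eventually P (nhds x)"
    and Q_open: "\<And>x. x \<in> S \<Longrightarrow> Q x \<Longrightarrow> eventually Q (nhds x)"
    and disjoint: "\<And>x. x \<in> S \<Longrightarrow> P x \<Longrightarrow> Q x \<Longrightarrow> False"
  shows "\<exists>x\<in>S. \<not> P x \<and> \<not> Q x"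
proof (rule ccontr)
  assume cover: "\<not> (\<exists>x\<in>S. \<not> P x \<and> \<not> Q x)"
  have open_eventually: "open {x. eventually R (nhds x)}" for R :: "'a \<Rightarrow> bool"
    by (subst open_subopen) (metis (mono_tags) eventually_nhds mem_Collect_eq subsetI)
  have "{x. eventually P (nhds x)} \<inter> S = {} \<or> {x. eventually Q (nhds x)} \<inter> S = {}"
  proof (rule connectedD[OF \<open>connected S\<close> open_eventually open_eventually])
    show "{x. eventually P (nhds x)} \<inter> {x. eventually Q (nhds x)} \<inter> S = {}"
      using disjoint by (auto dest: eventually_nhds_x_imp_x)
    show "S \<subseteq> {x. eventually P (nhds x)} \<union> {x. eventually Q (nhds x)}"
      using cover P_open Q_open by blast
  qed
  then show False
    using assms(2-5) P_open Q_open by blast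
qed

locale shooting =
  fixes \<alpha> c :: real
  assumes \<alpha>_pos: "0 < \<alpha>" and \<alpha>_less_pi: "\<alpha> < pi" and c_pos: "0 < c" and c_less_2: "c < 2"
begin

definition tan_gap :: "real \<Rightarrow> real" where
  "tan_gap b = tan ((\<alpha> - b) / 2)"

definition K_top :: "real \<Rightarrow> real" where
  "K_top b = (1 - tan (\<alpha> / 2) * tan_gap b) / (1 + tan (\<alpha> / 2) * tan_gap b)"

definition next_angle :: "real \<Rightarrow> real \<Rightarrow> real" where
  "next_angle b K = 2 * arctan ((1 - K) / ((1 + K) * tan_gap b))"

definition K_num :: "nat \<Rightarrow> real \<Rightarrow> real \<Rightarrow> real" where
  "K_num n b Kp = c * sin \<alpha> / 2 + real n * sin (\<alpha> - b) * Kp"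

definition K_next :: "nat \<Rightarrow> real \<Rightarrow> real \<Rightarrow> real" where
  "K_next n b Kp = K_num n b Kp / (real (Suc n) * sin b)"

text \<open>\<open>K_prev x n\<close> stands for \<open>K\<^sub>n\<^sub>-\<^sub>1\<close>, with \<open>K\<^sub>-\<^sub>1 = 0\<close>.\<close>

fun beta :: "real \<Rightarrow> nat \<Rightarrow> real" and K_prev :: "real \<Rightarrow> nat \<Rightarrow> real" where
  "beta x 0 = x"
| "K_prev x 0 = 0"
| "beta x (Suc n) = next_angle (beta x n) (K_next n (beta x n) (K_prev x n))"
| "K_prev x (Suc n) = K_next n (beta x n) (K_prev x n)"

declare beta.simps(2) [simp del] K_prev.simps(2) [simp del]

text \<open>These are \<open>(n+1) sin \<beta>\<^sub>n (K\<^sub>n - 1)\<close> and \<open>(n+1) sin \<beta>\<^sub>n (K_top \<beta>\<^sub>n - K\<^sub>n)\<close>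
  with the division by \<open>sin \<beta>\<^sub>n\<close> cleared, so that they stay continuous where \<open>\<beta>\<^sub>n = 0\<close>.\<close>

definition exit_bot :: "real \<Rightarrow> nat \<Rightarrow> real" where
  "exit_bot x n = K_num n (beta x n) (K_prev x n) - real (Suc n) * sin (beta x n)"

definition exit_top :: "real \<Rightarrow> nat \<Rightarrow> real" where
  "exit_top x n = real (Suc n) * sin (beta x n) * K_top (beta x n) - K_num n (beta x n) (K_prev x n)"

definition stays :: "real \<Rightarrow> nat \<Rightarrow> bool" where
  "stays x N \<longleftrightarrow> (\<forall>k<N. 0 < beta x k \<and> beta x k < \<alpha> \<and> exit_bot x k \<le> 0 \<and> exit_top x k \<le> 0)"

lemma beta_Suc: "beta x (Suc n) = next_angle (beta x n) (K_prev x (Suc n))"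
  by (simp add: beta.simps(2) K_prev.simps(2))

lemma stays_Suc:
  "stays x (Suc N) \<longleftrightarrow> stays x N \<and> 0 < beta x N \<and> beta x N < \<alpha> \<and> exit_bot x N \<le> 0 \<and> exit_top x N \<le> 0"
  by (auto simp: stays_def less_Suc_eq)

lemma stays_mono: "stays x N \<Longrightarrow> M \<le> N \<Longrightarrow> stays x M"
  by (simp add: stays_def)

lemma sin_pos_below_\<alpha>: "0 < b \<Longrightarrow> b < \<alpha> \<Longrightarrow> 0 < sin b"
  using \<alpha>_less_pi by (intro sin_gt_zero) auto

lemma sin_\<alpha>_pos: "0 < sin \<alpha>"
  using \<alpha>_pos \<alpha>_less_pi by (intro sin_gt_zero)

lemma cos_half_gap_pos: "0 \<le> b \<Longrightarrow> b \<le> \<alpha> \<Longrightarrow> 0 < cos ((\<alpha> - b) / 2)"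
  using \<alpha>_less_pi by (intro cos_gt_zero_pi) auto

lemma tan_gap_pos: "0 \<le> b \<Longrightarrow> b < \<alpha> \<Longrightarrow> 0 < tan_gap b"
  unfolding tan_gap_def using \<alpha>_less_pi by (intro tan_gt_zero) auto

lemma tan_gap_nonneg: "0 \<le> b \<Longrightarrow> b \<le> \<alpha> \<Longrightarrow> 0 \<le> tan_gap b"
  using tan_gap_pos[of b] by (cases "b = \<alpha>") (auto simp: tan_gap_def)

lemma tan_half_\<alpha>_pos: "0 < tan (\<alpha> / 2)"
  using \<alpha>_pos \<alpha>_less_pi by (intro tan_gt_zero) auto

lemma K_top_bounds: "0 \<le> b \<Longrightarrow> b \<le> \<alpha> \<Longrightarrow> -1 < K_top b \<and> K_top b \<le> 1"
  using mult_nonneg_nonneg[OF less_imp_le[OF tan_half_\<alpha>_pos] tan_gap_nonneg[of b]]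
  unfolding K_top_def by (simp add: divide_le_eq less_divide_eq)

lemma K_top_\<alpha> [simp]: "K_top \<alpha> = 1"
  by (simp add: K_top_def tan_gap_def)

lemma next_angle_one [simp]: "next_angle b 1 = 0"
  by (simp add: next_angle_def)

lemma next_angle_K_top: "0 \<le> b \<Longrightarrow> b < \<alpha> \<Longrightarrow> next_angle b (K_top b) = \<alpha>"
proof -
  assume "0 \<le> b" "b < \<alpha>"
  then have q: "0 < tan_gap b" by (rule tan_gap_pos)
  define p where "p = tan (\<alpha> / 2) * tan_gap b"
  have p: "0 < p"
    using q tan_half_\<alpha>_pos by (simp add: p_def)
  have "K_top b = (1 - p) / (1 + p)"
    by (simp add: K_top_def p_def)
  then have K_minus: "1 - K_top b = 2 / (1 + p) * p" and K_plus: "1 + K_top b = 2 / (1 + p)"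
    using p by (simp_all add: field_simps)
  have "(1 - K_top b) / ((1 + K_top b) * tan_gap b) = p / tan_gap b"
    unfolding K_minus K_plus mult.assoc using p by (intro mult_divide_mult_cancel_left) simp
  also have "\<dots> = tan (\<alpha> / 2)"
    using q by (simp add: p_def)
  finally have "(1 - K_top b) / ((1 + K_top b) * tan_gap b) = tan (\<alpha> / 2)" .
  then show ?thesis
    using \<alpha>_pos \<alpha>_less_pi by (simp add: next_angle_def arctan_tan)
qed

lemma next_angle_iffs:
  assumes "0 \<le> b" "b < \<alpha>" "-1 < K"
  shows next_angle_nonneg_iff: "0 \<le> next_angle b K \<longleftrightarrow> K \<le> 1"
    and next_angle_pos_iff: "0 < next_angle b K \<longleftrightarrow> K < 1"
    and next_angle_le_\<alpha>_iff: "next_angle b K \<le> \<alpha> \<longleftrightarrow> K_top b \<le> K"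
proof -
  have den: "0 < (1 + K) * tan_gap b"
    using assms tan_gap_pos by simp
  show "0 \<le> next_angle b K \<longleftrightarrow> K \<le> 1" "0 < next_angle b K \<longleftrightarrow> K < 1"
    using den by (simp_all add: next_angle_def zero_le_divide_iff zero_less_divide_iff)
  have "next_angle b K \<le> \<alpha> \<longleftrightarrow> arctan ((1 - K) / ((1 + K) * tan_gap b)) \<le> arctan (tan (\<alpha> / 2))"
    using \<alpha>_pos \<alpha>_less_pi by (auto simp: next_angle_def arctan_tan)
  also have "\<dots> \<longleftrightarrow> 1 - K \<le> tan (\<alpha> / 2) * ((1 + K) * tan_gap b)"
    using den by (simp add: arctan_le_iff divide_le_eq)
  also have "\<dots> \<longleftrightarrow> K_top b \<le> K"
  proof -
    have "0 < 1 + tan (\<alpha> / 2) * tan_gap b"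
      using tan_gap_pos[of b] tan_half_\<alpha>_pos assms by (simp add: add_pos_pos)
    then show ?thesis
      by (simp add: K_top_def divide_le_eq algebra_simps)
  qed
  finally show "next_angle b K \<le> \<alpha> \<longleftrightarrow> K_top b \<le> K" .
qed

lemma cos_next_angle:
  assumes "0 \<le> b" "b < \<alpha>" "-1 < K"
  shows "cos ((\<alpha> - b + next_angle b K) / 2) = K * cos ((\<alpha> - b - next_angle b K) / 2)"
proof -
  define A where "A = (\<alpha> - b) / 2"
  define t where "t = (1 - K) / ((1 + K) * tan_gap b)"
  define B where "B = arctan t"
  have angles: "(\<alpha> - b + next_angle b K) / 2 = A + B" "(\<alpha> - b - next_angle b K) / 2 = A - B"
    by (simp_all add: A_def B_def t_def next_angle_def field_simps)
  have "cos A \<noteq> 0"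
    using cos_half_gap_pos[of b] assms unfolding A_def by simp
  then have sin_A: "sin A = tan_gap b * cos A"
    by (simp add: tan_gap_def A_def tan_def)
  have sin_B: "sin B = t * cos B"
    using tan_arctan[of t] by (simp add: B_def tan_def field_simps)
  have "tan_gap b * t = (1 - K) / (1 + K)"
    using tan_gap_pos[of b] assms by (simp add: t_def)
  moreover have "0 < 1 + K"
    using assms by simp
  ultimately have qt: "1 - tan_gap b * t = K * (1 + tan_gap b * t)"
    by (simp add: field_simps)
  have "cos (A + B) = cos A * cos B * (1 - tan_gap b * t)"
    by (simp add: cos_add sin_A sin_B algebra_simps)
  also have "\<dots> = K * (cos A * cos B * (1 + tan_gap b * t))"
    by (simp add: qt)
  also have "cos A * cos B * (1 + tan_gap b * t) = cos (A - B)"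
    by (simp add: cos_diff sin_A sin_B algebra_simps)
  finally show ?thesis
    unfolding angles .
qed

lemma exit_bot_eq:
  "sin (beta x n) \<noteq> 0 \<Longrightarrow> exit_bot x n = real (Suc n) * sin (beta x n) * (K_prev x (Suc n) - 1)"
  by (simp add: exit_bot_def K_prev.simps(2) K_next_def right_diff_distrib)

lemma exit_top_eq:
  "sin (beta x n) \<noteq> 0 \<Longrightarrow>
    exit_top x n = real (Suc n) * sin (beta x n) * (K_top (beta x n) - K_prev x (Suc n))"
  by (simp add: exit_top_def K_prev.simps(2) K_next_def right_diff_distrib)

lemma stays_K_bounds:
  assumes "stays x N" "k < N"
  shows "0 < sin (beta x k)" and "K_top (beta x k) \<le> K_prev x (Suc k)"
    and "K_prev x (Suc k) \<le> 1" and "-1 < K_prev x (Suc k)"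
proof -
  have b: "0 < beta x k" "beta x k < \<alpha>" "exit_bot x k \<le> 0" "exit_top x k \<le> 0"
    using assms by (auto simp: stays_def)
  show sin_pos: "0 < sin (beta x k)"
    using b by (intro sin_pos_below_\<alpha>)
  show "K_top (beta x k) \<le> K_prev x (Suc k)" "K_prev x (Suc k) \<le> 1"
    using b sin_pos exit_bot_eq[of x k] exit_top_eq[of x k]
    by (auto simp: mult_le_0_iff)
  then show "-1 < K_prev x (Suc k)"
    using K_top_bounds[of "beta x k"] b by linarith
qed

lemma beta_range: "x \<in> {0..\<alpha>} \<Longrightarrow> stays x N \<Longrightarrow> 0 \<le> beta x N \<and> beta x N \<le> \<alpha>"
proof (cases N)
  case (Suc m)
  assume "stays x N"
  then have "0 < beta x m" "beta x m < \<alpha>"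
    using Suc by (auto simp: stays_def)
  with stays_K_bounds[OF \<open>stays x N\<close>, of m] show ?thesis
    using Suc by (simp add: beta_Suc next_angle_nonneg_iff next_angle_le_\<alpha>_iff)
qed simp

lemma exit_at_zero:
  assumes "beta x n = 0" "0 \<le> K_prev x n"
  shows "0 < exit_bot x n \<and> exit_top x n < 0"
proof -
  have "0 < K_num n 0 (K_prev x n)"
    using c_pos sin_\<alpha>_pos assms(2) unfolding K_num_def by (intro add_pos_nonneg) simp_all
  then show ?thesis
    using assms(1) by (simp add: exit_bot_def exit_top_def)
qed

lemma exit_at_\<alpha>:
  assumes "beta x n = \<alpha>"
  shows "exit_bot x n < 0 \<and> 0 < exit_top x n"
proof -
  have "c * sin \<alpha> / 2 < sin \<alpha>" "sin \<alpha> \<le> real (Suc n) * sin \<alpha>"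
    using c_less_2 sin_\<alpha>_pos by simp_all
  then have "c * sin \<alpha> / 2 < real (Suc n) * sin \<alpha>"
    by linarith
  then show ?thesis
    using assms by (simp add: exit_bot_def exit_top_def K_num_def)
qed

lemma exit_bot_plus_exit_top_nonpos:
  assumes "0 \<le> beta x n" "beta x n \<le> \<alpha>"
  shows "exit_bot x n + exit_top x n \<le> 0"
proof -
  have "0 \<le> sin (beta x n)"
    using assms \<alpha>_less_pi by (intro sin_ge_zero) auto
  moreover have "K_top (beta x n) \<le> 1"
    using K_top_bounds assms by blast
  ultimately have "real (Suc n) * sin (beta x n) * (K_top (beta x n) - 1) \<le> 0"
    by (simp add: mult_nonneg_nonpos)
  then show ?thesis
    by (simp add: exit_bot_def exit_top_def algebra_simps)
qed

lemma K_prev_nonneg_at_zero: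
  assumes "stays x N" "beta x N = 0"
  shows "0 \<le> K_prev x N"
proof (cases N)
  case (Suc m)
  have "0 \<le> beta x m" "beta x m < \<alpha>"
    using assms(1) Suc by (auto simp: stays_def)
  moreover have "-1 < K_prev x (Suc m)"
    using stays_K_bounds(4)[OF assms(1)] Suc by simp
  ultimately have "\<not> K_prev x (Suc m) < 1"
    using next_angle_pos_iff[of "beta x m" "K_prev x (Suc m)"] assms(2) Suc by (simp add: beta_Suc)
  then show ?thesis
    using Suc by simp
qed simp

lemma exit_top_neg_before_exit_bot:
  assumes "stays x N" "0 < exit_bot x N" "k < N"
  shows "exit_top x k < 0"
proof -
  have "exit_top x k \<noteq> 0"
  proof
    assume "exit_top x k = 0"
    then have "K_prev x (Suc k) = K_top (beta x k)"
      using exit_top_eq[of x k] stays_K_bounds(1)[OF assms(1,3)] by simp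
    moreover have "0 < beta x k" "beta x k < \<alpha>"
      using assms by (auto simp: stays_def)
    ultimately have "beta x (Suc k) = \<alpha>"
      by (simp add: beta_Suc next_angle_K_top)
    moreover have "beta x (Suc k) < \<alpha> \<or> Suc k = N"
      using assms(1,3) by (auto simp: stays_def Suc_lessI)
    ultimately show False
      using exit_at_\<alpha> assms(2) by fastforce
  qed
  then show ?thesis
    using assms by (auto simp: stays_def less_le)
qed

lemma exit_bot_neg_before_exit_top:
  assumes "stays x N" "0 < exit_top x N" "k < N"
  shows "exit_bot x k < 0"
proof -
  have "exit_bot x k \<noteq> 0"
  proof
    assume "exit_bot x k = 0"
    then have K: "K_prev x (Suc k) = 1"
      using exit_bot_eq[of x k] stays_K_bounds(1)[OF assms(1,3)] by simp
    then have "beta x (Suc k) = 0"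
      by (simp add: beta_Suc)
    moreover have "0 < beta x (Suc k) \<or> Suc k = N"
      using assms(1,3) by (auto simp: stays_def Suc_lessI)
    ultimately show False
      using exit_at_zero[of x "Suc k"] K assms(2) by fastforce
  qed
  then show ?thesis
    using assms by (auto simp: stays_def less_le)
qed

lemma isCont_K_top: "0 \<le> b \<Longrightarrow> b \<le> \<alpha> \<Longrightarrow> isCont K_top b"
proof -
  assume b: "0 \<le> b" "b \<le> \<alpha>"
  then have "cos ((\<alpha> - b) / 2) \<noteq> 0"
    using cos_half_gap_pos by force
  then have "isCont tan_gap b"
    unfolding tan_gap_def by (intro isCont_tan' continuous_intros) simp
  moreover have "1 + tan (\<alpha> / 2) * tan_gap b \<noteq> 0"
    using mult_nonneg_nonneg[OF less_imp_le[OF tan_half_\<alpha>_pos] tan_gap_nonneg[OF b]] by linarith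
  ultimately show "isCont K_top b"
    unfolding K_top_def[abs_def] by (intro continuous_intros)
qed

lemma isCont_orbit:
  assumes "stays x0 N" "n \<le> N"
  shows "isCont (\<lambda>x. beta x n) x0 \<and> isCont (\<lambda>x. K_prev x n) x0"
  using assms(2)
proof (induction n)
  case (Suc n)
  then have IH: "isCont (\<lambda>x. beta x n) x0" "isCont (\<lambda>x. K_prev x n) x0" by auto
  note bounds = stays_K_bounds[OF assms(1), of n]
  have b: "0 < beta x0 n" "beta x0 n < \<alpha>"
    using assms(1) Suc.prems by (auto simp: stays_def)
  have cont_K: "isCont (\<lambda>x. K_prev x (Suc n)) x0"
    unfolding K_prev.simps(2) K_next_def K_num_def
    using bounds Suc.prems by (intro continuous_intros IH) auto
  have "cos ((\<alpha> - beta x0 n) / 2) \<noteq> 0"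
    using cos_half_gap_pos[of "beta x0 n"] b by simp
  moreover have "(1 + K_prev x0 (Suc n)) * tan_gap (beta x0 n) \<noteq> 0"
    using tan_gap_pos[of "beta x0 n"] bounds b Suc.prems by simp
  ultimately have "isCont (\<lambda>x. beta x (Suc n)) x0"
    unfolding beta_Suc next_angle_def tan_gap_def
    by (intro continuous_intros isCont_tan' cont_K IH) simp_all
  with cont_K show ?case by simp
qed simp

lemma isCont_exits:
  assumes "x0 \<in> {0..\<alpha>}" "stays x0 N"
  shows "isCont (\<lambda>x. exit_bot x N) x0 \<and> isCont (\<lambda>x. exit_top x N) x0"
proof -
  have cont: "isCont (\<lambda>x. beta x N) x0" "isCont (\<lambda>x. K_prev x N) x0"
    using isCont_orbit[OF assms(2)] by auto
  have "isCont (\<lambda>x. K_top (beta x N)) x0"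
    using beta_range[OF assms] by (intro isCont_o2[OF cont(1)] isCont_K_top) auto
  with cont show ?thesis
    unfolding exit_bot_def exit_top_def K_num_def by (auto intro!: continuous_intros)
qed

lemma eventually_exit:
  assumes fg: "(f, g) = (exit_top, exit_bot) \<or> (f, g) = (exit_bot, exit_top)"
    and x0: "x0 \<in> {0..\<alpha>}" "stays x0 N" "0 < g x0 N"
  shows "eventually (\<lambda>x. \<exists>j. stays x j \<and> 0 < g x j) (nhds x0)"
proof -
  have stays_iff: "stays x j \<longleftrightarrow> (\<forall>k<j. 0 < beta x k \<and> beta x k < \<alpha> \<and> f x k \<le> 0 \<and> g x k \<le> 0)"
    for x j
    using fg by (auto simp: stays_def)
  have cont: "isCont (\<lambda>x. f x k) x0" "isCont (\<lambda>x. g x k) x0" if "k \<le> N" for k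
    using fg isCont_exits[OF x0(1) stays_mono[OF x0(2) that]] by auto
  have f_neg: "f x0 k < 0" if "k < N" for k
    using fg exit_top_neg_before_exit_bot[OF x0(2) _ that] exit_bot_neg_before_exit_top[OF x0(2) _ that] x0(3)
    by auto
  have "eventually (\<lambda>x. 0 < beta x k \<and> beta x k < \<alpha> \<and> f x k < 0) (nhds x0)" if k: "k < N" for k
  proof -
    have "isCont (\<lambda>x. beta x k) x0"
      using isCont_orbit[OF x0(2)] k by simp
    moreover have "0 < beta x0 k" "beta x0 k < \<alpha>"
      using x0(2) k by (auto simp: stays_def)
    ultimately show ?thesis
      using cont[of k] f_neg[OF k] k
      by (intro eventually_conj eventually_less_nhds_isCont continuous_intros) auto
  qed
  then have "eventually (\<lambda>x. \<forall>k\<in>{..<N}. 0 < beta x k \<and> beta x k < \<alpha> \<and> f x k < 0) (nhds x0)"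
    by (intro eventually_ball_finite) auto
  moreover have "eventually (\<lambda>x. 0 < g x N) (nhds x0)"
    using cont(2)[of N] x0(3) by (intro eventually_less_nhds_isCont continuous_intros) auto
  ultimately show ?thesis
  proof eventually_elim
    case (elim x)
    then obtain j where j: "0 < g x j" "\<forall>k<j. \<not> 0 < g x k"
      using exists_least_iff[of "\<lambda>j. 0 < g x j"] by blast
    then have "j \<le> N"
      using elim by (meson not_le)
    have "stays x j"
      unfolding stays_iff
    proof (intro allI impI)
      fix k assume "k < j"
      with \<open>j \<le> N\<close> have "k \<in> {..<N}" by simp
      with elim(1) have "0 < beta x k \<and> beta x k < \<alpha> \<and> f x k < 0" by blast
      with j(2) \<open>k < j\<close> show "0 < beta x k \<and> beta x k < \<alpha> \<and> f x k \<le> 0 \<and> g x k \<le> 0"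
        by (simp add: not_less)
    qed
    with j(1) show ?case by blast
  qed
qed

lemma stays_if_never_exits:
  assumes "x \<in> {0..\<alpha>}"
    and "\<And>N. stays x N \<Longrightarrow> exit_bot x N \<le> 0" "\<And>N. stays x N \<Longrightarrow> exit_top x N \<le> 0"
  shows "stays x N"
proof (induction N)
  case (Suc N)
  have "beta x N \<noteq> 0"
    using exit_at_zero[of x N] K_prev_nonneg_at_zero[OF Suc] assms(2)[OF Suc] by fastforce
  moreover have "beta x N \<noteq> \<alpha>"
    using exit_at_\<alpha>[of x N] assms(3)[OF Suc] by fastforce
  ultimately show ?case
    using beta_range[OF assms(1) Suc] Suc assms(2,3) by (simp add: stays_Suc)
qed (simp add: stays_def)

lemma exists_staying_orbit: "\<exists>x0. \<forall>N. stays x0 N"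
proof -
  have "\<exists>x\<in>{0..\<alpha>}. \<not> (\<exists>N. stays x N \<and> 0 < exit_bot x N) \<and> \<not> (\<exists>N. stays x N \<and> 0 < exit_top x N)"
  proof (rule connected_exists_neither)
    show "\<exists>N. stays 0 N \<and> 0 < exit_bot 0 N"
      using exit_at_zero[of 0 0] by (auto simp: stays_def)
    show "\<exists>N. stays \<alpha> N \<and> 0 < exit_top \<alpha> N"
      using exit_at_\<alpha>[of \<alpha> 0] by (auto simp: stays_def)
    show "eventually (\<lambda>x. \<exists>N. stays x N \<and> 0 < exit_bot x N) (nhds x)"
      if "x \<in> {0..\<alpha>}" "\<exists>N. stays x N \<and> 0 < exit_bot x N" for x
      using that eventually_exit[of exit_top exit_bot x] by blast
    show "eventually (\<lambda>x. \<exists>N. stays x N \<and> 0 < exit_top x N) (nhds x)"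
      if "x \<in> {0..\<alpha>}" "\<exists>N. stays x N \<and> 0 < exit_top x N" for x
      using that eventually_exit[of exit_bot exit_top x] by blast
    show False
      if x: "x \<in> {0..\<alpha>}" and bot: "\<exists>N. stays x N \<and> 0 < exit_bot x N"
        and top: "\<exists>M. stays x M \<and> 0 < exit_top x M"
      for x
    proof -
      obtain N M where N: "stays x N" "0 < exit_bot x N" and M: "stays x M" "0 < exit_top x M"
        using bot top by blast
      consider "N < M" | "M < N" | "N = M" by linarith
      then show False
      proof cases
        case 3
        then show False
          using exit_bot_plus_exit_top_nonpos[of x N] beta_range[OF x N(1)] N M by simp
      qed (use N M in \<open>auto simp: stays_def\<close>)
    qed
  qed (use \<alpha>_pos in auto)
  then show ?thesis
    using stays_if_never_exits by (meson not_le)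
qed

lemma K_prev_recurrence:
  assumes "stays x (Suc n)"
  shows "real (Suc n) * sin (beta x n) * K_prev x (Suc n)
    = c * sin \<alpha> / 2 + real n * sin (\<alpha> - beta x n) * K_prev x n"
  using stays_K_bounds(1)[OF assms lessI] by (simp add: K_prev.simps(2) K_next_def K_num_def)

lemma orbit_step_identity:
  assumes "stays x (Suc (Suc k))"
  defines "z \<equiv> \<lambda>n. cis (beta x n)"
  shows "cis \<alpha> * z (Suc k) + z k = complex_of_real (K_prev x (Suc k)) * (cis \<alpha> + z k * z (Suc k))"
    and "cis \<alpha> + z k * z (Suc k) \<noteq> 0"
proof -
  have range: "0 < beta x k" "beta x k < \<alpha>" "0 < beta x (Suc k)" "beta x (Suc k) < \<alpha>"
    using assms(1) by (auto simp: stays_def)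
  have "0 < cos ((\<alpha> - beta x k - beta x (Suc k)) / 2)"
    using range \<alpha>_less_pi by (intro cos_gt_zero_pi) auto
  moreover have "cos ((\<alpha> - beta x k + beta x (Suc k)) / 2)
      = K_prev x (Suc k) * cos ((\<alpha> - beta x k - beta x (Suc k)) / 2)"
    using cos_next_angle[of "beta x k" "K_prev x (Suc k)"] range stays_K_bounds(4)[OF assms(1)]
    by (simp add: beta_Suc)
  ultimately show "cis \<alpha> * z (Suc k) + z k = complex_of_real (K_prev x (Suc k)) * (cis \<alpha> + z k * z (Suc k))"
    and "cis \<alpha> + z k * z (Suc k) \<noteq> 0"
    using cis_mult_add_cis_eq_of_cos unfolding z_def by auto
qed

lemma staying_orbit_solution:
  assumes stays: "\<And>N. stays x0 N"
  defines "x \<equiv> \<lambda>n. cis (beta x0 n)"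
  shows "0 < beta x0 n" "beta x0 n < \<alpha>" "cis \<alpha> + x n * x (Suc n) \<noteq> 0"
    and "of_nat (Suc n) * ((x n)\<^sup>2 - 1) * ((x (Suc n) + x n / cis \<alpha>) / (cis \<alpha> + x n * x (Suc n)))
          - (if n = 0 then 0 else
              of_nat n * (1 - (x n)\<^sup>2 / (cis \<alpha>)\<^sup>2) * ((x (n - 1) + cis \<alpha> * x n) / (cis \<alpha> + x (n - 1) * x n)))
        = complex_of_real c * x n * (((cis \<alpha>)\<^sup>2 - 1) / (2 * (cis \<alpha>)\<^sup>2))"
proof -
  show "0 < beta x0 n" "beta x0 n < \<alpha>"
    using stays[of "Suc n"] by (simp_all add: stays_Suc)
  have step: "cis \<alpha> * x (Suc k) + x k = complex_of_real (K_prev x0 (Suc k)) * (cis \<alpha> + x k * x (Suc k))"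
    "cis \<alpha> + x k * x (Suc k) \<noteq> 0" for k
    unfolding x_def by (rule orbit_step_identity[OF stays])+
  show "cis \<alpha> + x n * x (Suc n) \<noteq> 0"
    by (rule step(2))
  have next_ratio: "(x (Suc n) + x n / cis \<alpha>) / (cis \<alpha> + x n * x (Suc n))
      = complex_of_real (K_prev x0 (Suc n)) / cis \<alpha>"
  proof -
    have "x (Suc n) + x n / cis \<alpha>
        = complex_of_real (K_prev x0 (Suc n)) * (cis \<alpha> + x n * x (Suc n)) / cis \<alpha>"
      unfolding step(1)[of n, symmetric] by (simp add: field_simps)
    with step(2)[of n] show ?thesis
      by simp
  qed
  have prev_ratio: "(if n = 0 then 0 else
        of_nat n * (1 - (x n)\<^sup>2 / (cis \<alpha>)\<^sup>2) * ((x (n - 1) + cis \<alpha> * x n) / (cis \<alpha> + x (n - 1) * x n)))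
      = of_nat n * (1 - (x n)\<^sup>2 / (cis \<alpha>)\<^sup>2) * complex_of_real (K_prev x0 n)"
  proof (cases n)
    case (Suc m)
    have "x m + cis \<alpha> * x (Suc m) = complex_of_real (K_prev x0 (Suc m)) * (cis \<alpha> + x m * x (Suc m))"
      using step(1)[of m] by (simp add: add.commute)
    with step(2)[of m] Suc show ?thesis
      by simp
  qed simp
  from cis_recurrence_of_real_recurrence[OF K_prev_recurrence[OF stays]]
  show "of_nat (Suc n) * ((x n)\<^sup>2 - 1) * ((x (Suc n) + x n / cis \<alpha>) / (cis \<alpha> + x n * x (Suc n)))
          - (if n = 0 then 0 else
              of_nat n * (1 - (x n)\<^sup>2 / (cis \<alpha>)\<^sup>2) * ((x (n - 1) + cis \<alpha> * x n) / (cis \<alpha> + x (n - 1) * x n)))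
        = complex_of_real c * x n * (((cis \<alpha>)\<^sup>2 - 1) / (2 * (cis \<alpha>)\<^sup>2))"
    unfolding next_ratio prev_ratio unfolding x_def .
qed

end

theorem theorem4:
  fixes \<alpha> c :: real
  assumes "0 < \<alpha>" "\<alpha> < pi" "0 < c" "c < 2"
  defines "\<epsilon> \<equiv> cis \<alpha>"
  shows "\<exists>\<beta> :: nat \<Rightarrow> real. \<exists>x :: nat \<Rightarrow> complex.
     (\<forall>n. x n = cis (\<beta> n) \<and> 0 < \<beta> n \<and> \<beta> n < \<alpha>) \<and>
     (\<forall>n. \<epsilon> + x n * x (Suc n) \<noteq> 0) \<and>
     (\<forall>n. of_nat (Suc n) * ((x n)\<^sup>2 - 1) * ((x (Suc n) + x n / \<epsilon>) / (\<epsilon> + x n * x (Suc n)))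
          - (if n = 0 then 0 else
              of_nat n * (1 - (x n)\<^sup>2 / \<epsilon>\<^sup>2) * ((x (n - 1) + \<epsilon> * x n) / (\<epsilon> + x (n - 1) * x n)))
          = complex_of_real c * x n * ((\<epsilon>\<^sup>2 - 1) / (2 * \<epsilon>\<^sup>2)))"
proof -
  interpret shooting \<alpha> c
    using assms(1-4) by unfold_locales
  obtain x0 where "\<And>N. stays x0 N"
    using exists_staying_orbit by blast
  note solution = staying_orbit_solution[OF this]
  show ?thesis
    unfolding \<epsilon>_def
    by (intro exI[of _ "beta x0"] exI[of _ "\<lambda>n. cis (beta x0 n)"] conjI allI refl solution)
qed

end
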